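(* Let $S=(G,P,\Lambda,I)$ be a completely simple semigroup in Rees form. (a) Suppose the columns of $P$ with indices $\lambda,\mu\in\Lambda$ are equal, i.e. $p_{k\lambda}=p_{k\mu}$ for all $k\in I$. Put $s_1=(\lambda,1,1)$, $s_2=(\mu,1,1)$. Then for every $\mathcal{L}_S$-term $t(x)$ in one variable $x$: if the word $[t](x)$ does not begin with the variable $x$, then $t(s_1)=t(s_2)$; if $[t](x)$ begins with $x$, then there are $g\in G$, $k\in I$ with $t(s_1)=(\lambda,g,k)$ and $t(s_2)=(\mu,g,k)$ (so the two values differ at most in the first index). (b) Symmetrically, suppose the rows of $P$ with indices $i,j\in I$ are equal, i.e. $p_{i\nu}=p_{j\nu}$ for all $\nu\in\Lambda$. Put $s_1=(1,1,i)$, $s_2=(1,1,j)$. Then for every $\mathcal{L}_S$-term $t(x)$: if $[t](x)$ does not end with $x$, then $t(s_1)=t(s_2)$; if $[t](x)$ ends with $x$, then there are $g\in G$, $\nu\in\Lambda$ with $t(s_1)=(\nu,g,i)$ and $t(s_2)=(\nu,g,j)$.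
   Context: Rees representation: a completely simple (c.s.) semigroup $S=(G,P,\Lambda,I)$ is given by a group $G$, index sets $\Lambda$ and $I$ (each containing a distinguished element $1$), and a matrix $P=(p_{i\lambda})_{i\in I,\lambda\in\Lambda}$ with entries in $G$ (rows indexed by $I$, columns by $\Lambda$), normalised so that $p_{1\lambda}=p_{i1}=1_G$ for all $i\in I,\lambda\in\Lambda$. Its elements are triples $(\lambda,g,i)$ with $\lambda\in\Lambda$, $g\in G$, $i\in I$ ($\lambda$ is the first index, $i$ the second index), with multiplication $(\lambda,g,i)(\mu,h,j)=(\lambda,g p_{i\mu} h,j)$ and inversion $(\lambda,g,i)^{-1}=(\lambda,p_{i\lambda}^{-1}g^{-1}p_{i\lambda}^{-1},i)$. The language $\mathcal{L}_S$ consists of $\cdot$, ${}^{-1}$ and a constant for every element of $S$. An $\mathcal{L}_S$-term in variables $X$ is built from variables and constants by products and by applying ${}^{-1}$. For a term $t$, $[t]$ denotes the word (sequence of variables and constants) obtained from $t$ by deleting all occurrences of the inversion (e.g. if $t=((xsy^{-1})^{-1}zx^{-1})^{-1}$ then $[t]=xsyzx$); "begins/ends with $x$" refers to the first/last symbol of this word. *)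

theory Defs
  imports "HOL-Algebra.Group"
begin

text \<open>The index sets Lambda and I are the types 'l and 'i, with distinguished
  elements l1 and i1. The sandwich matrix P has rows indexed by I and columns
  by Lambda: P i lam = p_{i lam}.\<close>

definition rees_carrier :: "('g, 'm) monoid_scheme \<Rightarrow> ('l \<times> 'g \<times> 'i) set" where
  "rees_carrier G = {(lam, g, i). g \<in> carrier G}"

definition rees_normalised ::
  "('g, 'm) monoid_scheme \<Rightarrow> ('i \<Rightarrow> 'l \<Rightarrow> 'g) \<Rightarrow> 'l \<Rightarrow> 'i \<Rightarrow> bool" where
  "rees_normalised G P l1 i1 \<longleftrightarrow>
     group G \<and> (\<forall>i lam. P i lam \<in> carrier G)
     \<and> (\<forall>lam. P i1 lam = \<one>\<^bsub>G\<^esub>) \<and> (\<forall>i. P i l1 = \<one>\<^bsub>G\<^esub>)"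

fun rees_mult ::
  "('g, 'm) monoid_scheme \<Rightarrow> ('i \<Rightarrow> 'l \<Rightarrow> 'g) \<Rightarrow> 'l \<times> 'g \<times> 'i \<Rightarrow> 'l \<times> 'g \<times> 'i \<Rightarrow> 'l \<times> 'g \<times> 'i" where
  "rees_mult G P (lam, g, i) (mu, h, j) = (lam, g \<otimes>\<^bsub>G\<^esub> P i mu \<otimes>\<^bsub>G\<^esub> h, j)"

fun rees_inv ::
  "('g, 'm) monoid_scheme \<Rightarrow> ('i \<Rightarrow> 'l \<Rightarrow> 'g) \<Rightarrow> 'l \<times> 'g \<times> 'i \<Rightarrow> 'l \<times> 'g \<times> 'i" where
  "rees_inv G P (lam, g, i) =
     (lam, inv\<^bsub>G\<^esub> (P i lam) \<otimes>\<^bsub>G\<^esub> inv\<^bsub>G\<^esub> g \<otimes>\<^bsub>G\<^esub> inv\<^bsub>G\<^esub> (P i lam), i)"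

datatype 'c lterm = Var | Const 'c | Mul "'c lterm" "'c lterm" | Inv "'c lterm"

fun lterm_consts :: "'c lterm \<Rightarrow> 'c set" where
  "lterm_consts Var = {}"
| "lterm_consts (Const c) = {c}"
| "lterm_consts (Mul a b) = lterm_consts a \<union> lterm_consts b"
| "lterm_consts (Inv a) = lterm_consts a"

fun lterm_eval ::
  "('g, 'm) monoid_scheme \<Rightarrow> ('i \<Rightarrow> 'l \<Rightarrow> 'g) \<Rightarrow> 'l \<times> 'g \<times> 'i
     \<Rightarrow> ('l \<times> 'g \<times> 'i) lterm \<Rightarrow> 'l \<times> 'g \<times> 'i" where
  "lterm_eval G P s Var = s"
| "lterm_eval G P s (Const c) = c"
| "lterm_eval G P s (Mul a b) = rees_mult G P (lterm_eval G P s a) (lterm_eval G P s b)"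
| "lterm_eval G P s (Inv a) = rees_inv G P (lterm_eval G P s a)"

datatype 'c sym = SymX | SymC 'c

fun lterm_word :: "'c lterm \<Rightarrow> 'c sym list" where
  "lterm_word Var = [SymX]"
| "lterm_word (Const c) = [SymC c]"
| "lterm_word (Mul a b) = lterm_word a @ lterm_word b"
| "lterm_word (Inv a) = lterm_word a"

end

theory Submission
  imports Defs
begin

text \<open>
  Proof idea.  Two observations about evaluating a one-variable term t in a Rees
  matrix semigroup, both proved by structural induction on t:

  (1) Index propagation.  A product keeps the first index of its left factor and
      the second index of its right factor, and inversion keeps both indices.
      Hence the first index of t(s) is the first index of whatever symbol heads
      the word [t], and the second index that of the symbol ending [t].

  (2) Twins.  Call two elements column twins if they agree in the group and
      second components and their first indices label equal columns of P
      (dually row twins).  Multiplication and inversion map twins to twins,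
      because the sandwich entries they consult only see the column (row) of
      the index.  So s1, s2 twins implies t(s1), t(s2) twins.

  For part (a), (2) says t(s1), t(s2) differ at most in the first index, and (1)
  says that index is that of a constant (hence the same) unless [t] begins with
  x, in which case it is lambda resp. mu.  Part (b) is the mirror image.
\<close>

text \<open>Every term has a symbol, so hd and last of [t] are meaningful.\<close>
lemma lterm_word_nonempty: "lterm_word t \<noteq> []"
  by (induction t) auto

lemma fst_rees_mult: "fst (rees_mult G P x y) = fst x"
  by (cases x; cases y) simp

lemma fst_rees_inv: "fst (rees_inv G P x) = fst x"
  by (cases x) simp

lemma snd_snd_rees_mult: "snd (snd (rees_mult G P x y)) = snd (snd y)"
  by (cases x; cases y) simp

lemma snd_snd_rees_inv: "snd (snd (rees_inv G P x)) = snd (snd x)"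
  by (cases x) simp

lemma fst_lterm_eval:
  "fst (lterm_eval G P s t) =
     (case hd (lterm_word t) of SymX \<Rightarrow> fst s | SymC c \<Rightarrow> fst c)"
  by (induction t) (simp_all add: fst_rees_mult fst_rees_inv lterm_word_nonempty)

lemma snd_snd_lterm_eval:
  "snd (snd (lterm_eval G P s t)) =
     (case last (lterm_word t) of SymX \<Rightarrow> snd (snd s) | SymC c \<Rightarrow> snd (snd c))"
  by (induction t) (simp_all add: snd_snd_rees_mult snd_snd_rees_inv lterm_word_nonempty)

lemma rees_mult_closed:
  assumes "group G" "\<And>i lam. P i lam \<in> carrier G"
    and "x \<in> rees_carrier G" "y \<in> rees_carrier G"
  shows "rees_mult G P x y \<in> rees_carrier G"
  using assms by (cases x; cases y) (auto simp: rees_carrier_def intro: group.is_monoid monoid.m_closed)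

lemma rees_inv_closed:
  assumes "group G" "\<And>i lam. P i lam \<in> carrier G" and "x \<in> rees_carrier G"
  shows "rees_inv G P x \<in> rees_carrier G"
  using assms by (cases x) (auto simp: rees_carrier_def group.is_monoid monoid.m_closed group.inv_closed)

lemma lterm_eval_closed:
  assumes "group G" "\<And>i lam. P i lam \<in> carrier G"
    and "s \<in> rees_carrier G" "lterm_consts t \<subseteq> rees_carrier G"
  shows "lterm_eval G P s t \<in> rees_carrier G"
  using assms(4) by (induction t) (simp_all add: assms(1-3) rees_mult_closed rees_inv_closed)

fun col_twins :: "('i \<Rightarrow> 'l \<Rightarrow> 'g) \<Rightarrow> 'l \<times> 'g \<times> 'i \<Rightarrow> 'l \<times> 'g \<times> 'i \<Rightarrow> bool" where
  "col_twins P (lam, g, i) (mu, h, j) \<longleftrightarrow> g = h \<and> i = j \<and> (\<forall>k. P k lam = P k mu)"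

fun row_twins :: "('i \<Rightarrow> 'l \<Rightarrow> 'g) \<Rightarrow> 'l \<times> 'g \<times> 'i \<Rightarrow> 'l \<times> 'g \<times> 'i \<Rightarrow> bool" where
  "row_twins P (lam, g, i) (mu, h, j) \<longleftrightarrow> lam = mu \<and> g = h \<and> (\<forall>nu. P i nu = P j nu)"

text \<open>Products and inverses of twins are twins: the only sandwich entries that
  can differ are those in the twin column (row), and these are equal.  No group
  axioms are involved.\<close>
lemma col_twins_rees_mult:
  "col_twins P x x' \<Longrightarrow> col_twins P y y' \<Longrightarrow>
     col_twins P (rees_mult G P x y) (rees_mult G P x' y')"
  by (cases x; cases x'; cases y; cases y') auto

lemma col_twins_rees_inv:
  "col_twins P x x' \<Longrightarrow> col_twins P (rees_inv G P x) (rees_inv G P x')"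
  by (cases x; cases x') auto

lemma row_twins_rees_mult:
  "row_twins P x x' \<Longrightarrow> row_twins P y y' \<Longrightarrow>
     row_twins P (rees_mult G P x y) (rees_mult G P x' y')"
  by (cases x; cases x'; cases y; cases y') auto

lemma row_twins_rees_inv:
  "row_twins P x x' \<Longrightarrow> row_twins P (rees_inv G P x) (rees_inv G P x')"
  by (cases x; cases x') auto

lemma col_twins_lterm_eval:
  assumes "col_twins P s1 s2"
  shows "col_twins P (lterm_eval G P s1 t) (lterm_eval G P s2 t)"
proof (induction t)
  case (Const c)
  show ?case by (cases c) simp
qed (simp_all add: assms col_twins_rees_mult col_twins_rees_inv)

lemma row_twins_lterm_eval:
  assumes "row_twins P s1 s2"
  shows "row_twins P (lterm_eval G P s1 t) (lterm_eval G P s2 t)"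
proof (induction t)
  case (Const c)
  show ?case by (cases c) simp
qed (simp_all add: assms row_twins_rees_mult row_twins_rees_inv)

lemma equal_columns_term_values:
  fixes i1 :: 'i
  assumes grp: "group G" and P_closed: "\<And>i lam. P i lam \<in> carrier G"
    and cols: "\<forall>k. P k lam = P k mu" and t_in_S: "lterm_consts t \<subseteq> rees_carrier G"
  defines "s1 \<equiv> (lam, \<one>\<^bsub>G\<^esub>, i1)" and "s2 \<equiv> (mu, \<one>\<^bsub>G\<^esub>, i1)"
  shows "(hd (lterm_word t) \<noteq> SymX \<longrightarrow> lterm_eval G P s1 t = lterm_eval G P s2 t) \<and>
         (hd (lterm_word t) = SymX \<longrightarrow>
            (\<exists>g k. g \<in> carrier G \<and>
               lterm_eval G P s1 t = (lam, g, k) \<and> lterm_eval G P s2 t = (mu, g, k)))"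
proof -
  obtain a g k b h k' where v1: "lterm_eval G P s1 t = (a, g, k)"
    and v2: "lterm_eval G P s2 t = (b, h, k')"
    by (metis prod_cases3)
  have "col_twins P s1 s2" using cols by (simp add: s1_def s2_def)
  then have twins: "h = g" "k' = k"
    using col_twins_lterm_eval[of P s1 s2 G t] v1 v2 by auto
  have "s1 \<in> rees_carrier G"
    using grp by (simp add: s1_def rees_carrier_def group.is_monoid monoid.one_closed)
  then have "lterm_eval G P s1 t \<in> rees_carrier G"
    by (rule lterm_eval_closed[OF grp P_closed _ t_in_S])
  then have g: "g \<in> carrier G"
    using v1 by (simp add: rees_carrier_def)
  have heads: "a = (case hd (lterm_word t) of SymX \<Rightarrow> lam | SymC c \<Rightarrow> fst c)"
    "b = (case hd (lterm_word t) of SymX \<Rightarrow> mu | SymC c \<Rightarrow> fst c)"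
    using fst_lterm_eval[of G P s1 t] fst_lterm_eval[of G P s2 t] v1 v2
    unfolding s1_def s2_def by (simp_all cong: sym.case_cong)
  show ?thesis
    using v1 v2 twins g heads by (cases "hd (lterm_word t)") auto
qed

lemma equal_rows_term_values:
  fixes l1 :: 'l
  assumes grp: "group G" and P_closed: "\<And>i lam. P i lam \<in> carrier G"
    and rows: "\<forall>nu. P i nu = P j nu" and t_in_S: "lterm_consts t \<subseteq> rees_carrier G"
  defines "s1 \<equiv> (l1, \<one>\<^bsub>G\<^esub>, i)" and "s2 \<equiv> (l1, \<one>\<^bsub>G\<^esub>, j)"
  shows "(last (lterm_word t) \<noteq> SymX \<longrightarrow> lterm_eval G P s1 t = lterm_eval G P s2 t) \<and>
         (last (lterm_word t) = SymX \<longrightarrow>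
            (\<exists>g nu. g \<in> carrier G \<and>
               lterm_eval G P s1 t = (nu, g, i) \<and> lterm_eval G P s2 t = (nu, g, j)))"
proof -
  obtain a g k b h k' where v1: "lterm_eval G P s1 t = (a, g, k)"
    and v2: "lterm_eval G P s2 t = (b, h, k')"
    by (metis prod_cases3)
  have "row_twins P s1 s2" using rows by (simp add: s1_def s2_def)
  then have twins: "b = a" "h = g"
    using row_twins_lterm_eval[of P s1 s2 G t] v1 v2 by auto
  have "s1 \<in> rees_carrier G"
    using grp by (simp add: s1_def rees_carrier_def group.is_monoid monoid.one_closed)
  then have "lterm_eval G P s1 t \<in> rees_carrier G"
    by (rule lterm_eval_closed[OF grp P_closed _ t_in_S])
  then have g: "g \<in> carrier G"
    using v1 by (simp add: rees_carrier_def)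
  have lasts: "k = (case last (lterm_word t) of SymX \<Rightarrow> i | SymC c \<Rightarrow> snd (snd c))"
    "k' = (case last (lterm_word t) of SymX \<Rightarrow> j | SymC c \<Rightarrow> snd (snd c))"
    using snd_snd_lterm_eval[of G P s1 t] snd_snd_lterm_eval[of G P s2 t] v1 v2
    unfolding s1_def s2_def by (simp_all cong: sym.case_cong)
  show ?thesis
    using v1 v2 twins g lasts by (cases "last (lterm_word t)") auto
qed

theorem mainTheorem1:
  fixes G :: "('g, 'm) monoid_scheme" and P :: "'i \<Rightarrow> 'l \<Rightarrow> 'g"
    and l1 :: 'l and i1 :: 'i
  assumes "rees_normalised G P l1 i1"
  shows "(\<forall>lam mu. (\<forall>k. P k lam = P k mu) \<longrightarrow>
            (\<forall>t :: ('l \<times> 'g \<times> 'i) lterm. lterm_consts t \<subseteq> rees_carrier G \<longrightarrow>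
               (hd (lterm_word t) \<noteq> SymX \<longrightarrow>
                  lterm_eval G P (lam, \<one>\<^bsub>G\<^esub>, i1) t = lterm_eval G P (mu, \<one>\<^bsub>G\<^esub>, i1) t) \<and>
               (hd (lterm_word t) = SymX \<longrightarrow>
                  (\<exists>g k. g \<in> carrier G \<and>
                     lterm_eval G P (lam, \<one>\<^bsub>G\<^esub>, i1) t = (lam, g, k) \<and>
                     lterm_eval G P (mu, \<one>\<^bsub>G\<^esub>, i1) t = (mu, g, k)))))
       \<and> (\<forall>i j. (\<forall>nu. P i nu = P j nu) \<longrightarrow>
            (\<forall>t :: ('l \<times> 'g \<times> 'i) lterm. lterm_consts t \<subseteq> rees_carrier G \<longrightarrow>
               (last (lterm_word t) \<noteq> SymX \<longrightarrow>
                  lterm_eval G P (l1, \<one>\<^bsub>G\<^esub>, i) t = lterm_eval G P (l1, \<one>\<^bsub>G\<^esub>, j) t) \<and>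
               (last (lterm_word t) = SymX \<longrightarrow>
                  (\<exists>g nu. g \<in> carrier G \<and>
                     lterm_eval G P (l1, \<one>\<^bsub>G\<^esub>, i) t = (nu, g, i) \<and>
                     lterm_eval G P (l1, \<one>\<^bsub>G\<^esub>, j) t = (nu, g, j)))))"
proof -
  have grp: "group G" and P_closed: "\<And>i lam. P i lam \<in> carrier G"
    using assms by (auto simp: rees_normalised_def)
  show ?thesis
    using equal_columns_term_values[of G P, OF grp P_closed]
      equal_rows_term_values[of G P, OF grp P_closed]
    by blast
qed

end
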